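(* Let $g:\mathbb{Z}_{\ge 0}\to\mathbb{R}$ be a linearly progressing opponent process with switching time $\tau_0\ge1$ (so $g(0)>0$). Let $y_{\min}\in\mathbb{R}$, let $(y^{\mathrm{nat}}_t)_{t\ge0}$ be an arbitrary real sequence, and let gains $K_+,K_-$ satisfy $K_+\le g(0)^{-1}\le K_-$. Set $u_{-1}=0$, $y_0=y^{\mathrm{nat}}_0$, and for $t\ge0$ define $$u_t=\max\bigl\{0,\ u_{t-1}-K_+(y_t-y_{\min})_+-K_-(y_t-y_{\min})_-\bigr\},\qquad y_{t+1}=\sum_{k=0}^{t}g(k)\,u_{t-k}+y^{\mathrm{nat}}_{t+1},$$ where $(x)_+=\max(x,0)$ and $(x)_-=\min(x,0)$. Then for every $t\ge0$, $$y_{t+1}\ge y_{\min}+\bigl(y^{\mathrm{nat}}_{t+1}-y^{\mathrm{nat}}_t\bigr)-\sum_{k=1}^{t}g(k)\bigl(u_{t-k-1}-u_{t-k}\bigr).$$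
   Context: An impulse response $g:\mathbb{Z}_{\ge0}\to\mathbb{R}$ is an opponent process if there is a time $\tau_0$ with $g(\tau)>0$ for $\tau<\tau_0$ and $g(\tau)\le 0$ for $\tau\ge\tau_0$. It is a linearly progressing opponent process (LPOP) if in addition there is $\alpha\in[0,1)$ with $g(t+1)\le\alpha\,g(t)$ for all $t<\tau_0-1$ and $|g(t+1)|\ge\alpha\,|g(t)|$ for all $t\ge\tau_0$. *)

theory Defs
  imports Complex_Main
begin

definition opponent_process :: "(nat \<Rightarrow> real) \<Rightarrow> nat \<Rightarrow> bool" where
  "opponent_process g \<tau>0 \<longleftrightarrow>
     (\<forall>\<tau><\<tau>0. g \<tau> > 0) \<and> (\<forall>\<tau>\<ge>\<tau>0. g \<tau> \<le> 0)"

definition lpop :: "(nat \<Rightarrow> real) \<Rightarrow> nat \<Rightarrow> bool" where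
  "lpop g \<tau>0 \<longleftrightarrow> opponent_process g \<tau>0 \<and>
     (\<exists>\<alpha>::real. 0 \<le> \<alpha> \<and> \<alpha> < 1 \<and>
        (\<forall>t. t + 1 < \<tau>0 \<longrightarrow> g (t + 1) \<le> \<alpha> * g t) \<and>
        (\<forall>t\<ge>\<tau>0. \<bar>g (t + 1)\<bar> \<ge> \<alpha> * \<bar>g t\<bar>))"

end

theory Submission
  imports Defs
begin

text \<open>Subtracting the convolution formulas for \<open>y t\<close> and \<open>y (t + 1)\<close> writes the
  increment of \<open>y - ynat\<close> as \<open>\<Sum>k\<le>t. g k * (u (t - k) - u (t - k - 1))\<close>.  The term \<open>k = 0\<close> is
  the immediate effect of the current control move, and the gain bounds \<open>K\<^sub>+ \<le> 1 / g 0 \<le> K\<^sub>-\<close>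
  guarantee that this move cannot push \<open>y t\<close> below \<open>ymin\<close>; the terms \<open>k \<ge> 1\<close> are exactly
  the sum on the right-hand side.\<close>

lemma opponent_process_initial_pos:
  "opponent_process g \<tau>0 \<Longrightarrow> 0 < \<tau>0 \<Longrightarrow> 0 < g 0"
  by (simp add: opponent_process_def)

lemma lpop_imp_opponent_process: "lpop g \<tau>0 \<Longrightarrow> opponent_process g \<tau>0"
  by (simp add: lpop_def)

lemma convolution_lagged:
  fixes g :: "nat \<Rightarrow> 'a::comm_ring" and u :: "int \<Rightarrow> 'a" and y ynat :: "nat \<Rightarrow> 'a"
  assumes "u (-1) = 0" and "y 0 = ynat 0"
    and "\<And>t. y (t + 1) = (\<Sum>k=0..t. g k * u (int t - int k)) + ynat (t + 1)"
  shows "y t - ynat t = (\<Sum>k=0..t. g k * u (int t - int k - 1))"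
proof (cases t)
  case 0
  then show ?thesis using assms(1,2) by simp
next
  case (Suc s)
  have "(\<Sum>k=0..Suc s. g k * u (int (Suc s) - int k - 1))
      = (\<Sum>k=0..s. g k * u (int (Suc s) - int k - 1)) + g (Suc s) * u (-1)"
    by simp
  also have "\<dots> = (\<Sum>k=0..s. g k * u (int s - int k))"
    using assms(1) by simp
  finally show ?thesis using assms(3)[of s] Suc by simp
qed

lemma convolution_increment:
  fixes g :: "nat \<Rightarrow> 'a::comm_ring" and u :: "int \<Rightarrow> 'a" and y ynat :: "nat \<Rightarrow> 'a"
  assumes "u (-1) = 0" and "y 0 = ynat 0"
    and "\<And>t. y (t + 1) = (\<Sum>k=0..t. g k * u (int t - int k)) + ynat (t + 1)"
  shows "y (t + 1) - ynat (t + 1) - (y t - ynat t)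
       = g 0 * (u (int t) - u (int t - 1))
         - (\<Sum>k=1..t. g k * (u (int t - int k - 1) - u (int t - int k)))"
proof -
  have "y (t + 1) - ynat (t + 1) - (y t - ynat t)
      = (\<Sum>k=0..t. g k * (u (int t - int k) - u (int t - int k - 1)))"
    using convolution_lagged[OF assms, of t] assms(3)[of t]
    by (simp add: sum_subtractf algebra_simps)
  also have "\<dots> = g 0 * (u (int t) - u (int t - 1))
      + (\<Sum>k=1..t. g k * (u (int t - int k) - u (int t - int k - 1)))"
    by (simp add: sum.atLeast_Suc_atMost)
  also have "(\<Sum>k=1..t. g k * (u (int t - int k) - u (int t - int k - 1)))
      = - (\<Sum>k=1..t. g k * (u (int t - int k - 1) - u (int t - int k)))"
    by (simp add: sum_negf[symmetric] algebra_simps)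
  finally show ?thesis by simp
qed

lemma gain_bounded_step:
  fixes a Kp Km e du :: real
  assumes "0 < a" and "Kp \<le> 1 / a" and "1 / a \<le> Km"
    and "- Kp * max e 0 - Km * min e 0 \<le> du"
  shows "0 \<le> e + a * du"
proof (cases "0 \<le> e")
  case True
  have "a * Kp \<le> 1" using assms(1,2) by (simp add: field_simps)
  then have "a * Kp * e \<le> e" using mult_right_mono[of "a * Kp" 1 e] True by simp
  moreover have "- a * Kp * e \<le> a * du"
    using mult_left_mono[OF assms(4), of a] assms(1) True by simp
  ultimately show ?thesis by linarith
next
  case False
  have "1 \<le> a * Km" using assms(1,3) by (simp add: field_simps)
  then have "a * Km * e \<le> e" using mult_right_mono_neg[of 1 "a * Km" e] False by simp
  moreover have "- a * Km * e \<le> a * du"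
    using mult_left_mono[OF assms(4), of a] assms(1) False by simp
  ultimately show ?thesis by linarith
qed

theorem lemma1:
  fixes g :: "nat \<Rightarrow> real" and \<tau>0 :: nat
    and ymin Kp Km :: real and ynat y :: "nat \<Rightarrow> real" and u :: "int \<Rightarrow> real"
  assumes "lpop g \<tau>0" and "\<tau>0 \<ge> 1"
    and "Kp \<le> 1 / g 0" and "1 / g 0 \<le> Km"
    and "u (-1) = 0"
    and "y 0 = ynat 0"
    and "\<And>t::nat. u (int t) = max 0 (u (int t - 1) - Kp * max (y t - ymin) 0
                                        - Km * min (y t - ymin) 0)"
    and "\<And>t::nat. y (t + 1) = (\<Sum>k=0..t. g k * u (int t - int k)) + ynat (t + 1)"
  shows "y (t + 1) \<ge> ymin + (ynat (t + 1) - ynat t)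
           - (\<Sum>k=1..t. g k * (u (int t - int k - 1) - u (int t - int k)))"
proof -
  have "0 < g 0"
    using assms(1,2) by (auto intro: opponent_process_initial_pos lpop_imp_opponent_process)
  moreover have "- Kp * max (y t - ymin) 0 - Km * min (y t - ymin) 0 \<le> u (int t) - u (int t - 1)"
    using assms(7)[of t] by linarith
  ultimately have "0 \<le> (y t - ymin) + g 0 * (u (int t) - u (int t - 1))"
    using assms(3,4) gain_bounded_step by blast
  then show ?thesis
    using convolution_increment[OF assms(5,6,8), of t] by linarith
qed

end
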